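(* Assume the Setup below. For $n\ge1$ let $\Psi(n)=\Psi_{\theta_0}(n)$, $\dot\Psi(n)=\frac{d}{d\theta}\Psi_\theta(n)|_{\theta_0}$ and $$M^{(n)}=|\Psi(n)\rangle\langle\dot\Psi(n)|-|\dot\Psi(n)\rangle\langle\Psi(n)|$$ on $\mathcal H_0\otimes\mathcal H_1\otimes\cdots\otimes\mathcal H_n$. Let $1\le j\le n$ and let $e^{[1]},\dots,e^{[j-1]}\in\mathbb C^k$ be unit vectors with $|\langle e^{[l]}|\chi\rangle|^2=1/k$ for all $l$. Define $$M^{(n)}(\underline{j-1})=\big\langle e^{[1]}\otimes\cdots\otimes e^{[j-1]}\big|M^{(n)}\big|e^{[1]}\otimes\cdots\otimes e^{[j-1]}\big\rangle$$ (partial matrix element over $\mathcal H_1,\dots,\mathcal H_{j-1}$, an operator on $\mathcal H_0\otimes\mathcal H_j\otimes\cdots\otimes\mathcal H_n$) and $M^{(n)}_j(\underline{j-1})=\mathrm{Tr}_{0,j+1,\dots,n}M^{(n)}(\underline{j-1})$, an operator on $\mathcal H_j\cong\mathbb C^k$. Then $$M^{(n)}_j(\underline{j-1})=M^{(j)}_j(\underline{j-1}).$$ Consequently, in the sequential adaptive procedure in which the basis $\{e^{[j]}_i\}_{i=1}^k$ of unit $j$ is chosen (given the previously chosen bases and outcomes $i_1,\dots,i_{j-1}$, with $e^{[l]}=e^{[l]}_{i_l}$) to satisfy $\langle e^{[j]}_i|M^{(n)}_j(\underline{j-1})|e^{[j]}_i\rangle=0$ and $|\langle e^{[j]}_i|\chi\rangle|^2=1/k$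 for all $i$, the constraints determining the bases of units $1,\dots,j$ are the same for every output length $n\ge j$, so these bases can be chosen independently of $n$.
   Context: Setup: Let $D,k\ge2$ be integers, $\mathcal H_0=\mathbb C^D$ (the system, e.g. system plus absorber) and $\mathcal H_1,\dots,\mathcal H_n$ copies of $\mathbb C^k$ (noise units). Let $\chi\in\mathbb C^k$ be a unit vector and $P_\chi=|\chi\rangle\langle\chi|$. Let $\theta\mapsto W_\theta$ be a smooth family of unitaries on $\mathbb C^D\otimes\mathbb C^k$, and let $W^{(j)}_\theta$ denote $W_\theta$ acting on $\mathcal H_0\otimes\mathcal H_j$ (identity on the other factors). Fix $\theta_0$ and write $W=W_{\theta_0}$, $\dot W=\frac{dW_\theta}{d\theta}|_{\theta_0}$. Assume there is a unit vector $\psi\in\mathbb C^D$ with $W(\psi\otimes\chi)=\psi\otimes\chi$ and $\langle\psi\otimes\chi|\dot W|\psi\otimes\chi\rangle=0$. Define $\Psi_\theta(n)=W^{(n)}_\theta\cdots W^{(1)}_\theta(\psi\otimes\chi^{\otimes n})\in\mathcal H_0\otimes\mathcal H_1\otimes\cdots\otimes\mathcal H_n$. $\mathrm{Tr}_{0,j+1,\dots,n}$ denotes partial trace over $\mathcal H_0,\mathcal H_{j+1},\dots,\mathcal H_n$. *)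

theory Defs
  imports "HOL-Analysis.Analysis"
begin

text \<open>Basis of H_0 = C^D is indexed by a < D, basis of each noise unit C^k by i < k.
  A basis index of H_0 (x) H_1 (x) ... (x) H_n is a pair (a, xs) with a < D and xs a list of
  length n with entries < k; xs ! (j-1) is the index of the factor H_j.
  Vectors are functions nat \<times> nat list \<Rightarrow> complex, operators are kernels (matrices)
  indexed by two such basis indices.  A unitary on C^D (x) C^k is a matrix
  W :: (nat \<times> nat) \<Rightarrow> (nat \<times> nat) \<Rightarrow> complex, indices (system, unit).\<close>

definition cube :: "nat \<Rightarrow> nat \<Rightarrow> nat list set" where
  "cube k m = {xs. length xs = m \<and> set xs \<subseteq> {..<k}}"

definition pairs :: "nat \<Rightarrow> nat \<Rightarrow> (nat \<times> nat) set" where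
  "pairs D k = {..<D} \<times> {..<k}"

definition unitary_mat :: "nat \<Rightarrow> nat \<Rightarrow> ((nat \<times> nat) \<Rightarrow> (nat \<times> nat) \<Rightarrow> complex) \<Rightarrow> bool" where
  "unitary_mat D k U \<longleftrightarrow>
     (\<forall>p\<in>pairs D k. \<forall>q\<in>pairs D k.
        (\<Sum>r\<in>pairs D k. cnj (U r p) * U r q) = (if p = q then 1 else 0)) \<and>
     (\<forall>p\<in>pairs D k. \<forall>q\<in>pairs D k.
        (\<Sum>r\<in>pairs D k. U p r * cnj (U q r)) = (if p = q then 1 else 0))"

definition vderiv :: "(real \<Rightarrow> complex) \<Rightarrow> real \<Rightarrow> complex" where
  "vderiv g = (\<lambda>t. vector_derivative g (at t))"

definition smooth_cfun :: "(real \<Rightarrow> complex) \<Rightarrow> bool" where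
  "smooth_cfun f \<longleftrightarrow> (\<forall>m t. (vderiv ^^ m) f differentiable (at t))"

text \<open>W^{(j)}: W acting on H_0 (x) H_j (identity elsewhere), j \<ge> 1.\<close>
definition applyW :: "nat \<Rightarrow> nat \<Rightarrow> ((nat \<times> nat) \<Rightarrow> (nat \<times> nat) \<Rightarrow> complex) \<Rightarrow> nat
     \<Rightarrow> (nat \<times> nat list \<Rightarrow> complex) \<Rightarrow> (nat \<times> nat list \<Rightarrow> complex)" where
  "applyW D k U j v = (\<lambda>(a, xs).
     \<Sum>(b, c)\<in>pairs D k. U (a, xs ! (j - 1)) (b, c) * v (b, xs[j - 1 := c]))"

definition init_state :: "(nat \<Rightarrow> complex) \<Rightarrow> (nat \<Rightarrow> complex) \<Rightarrow> nat \<times> nat list \<Rightarrow> complex" where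
  "init_state psi chi = (\<lambda>(a, xs). psi a * (\<Prod>i<length xs. chi (xs ! i)))"

fun steps :: "nat \<Rightarrow> nat \<Rightarrow> ((nat \<times> nat) \<Rightarrow> (nat \<times> nat) \<Rightarrow> complex) \<Rightarrow> nat
     \<Rightarrow> (nat \<times> nat list \<Rightarrow> complex) \<Rightarrow> (nat \<times> nat list \<Rightarrow> complex)" where
  "steps D k U 0 v = v"
| "steps D k U (Suc m) v = applyW D k U (Suc m) (steps D k U m v)"

definition Psi :: "nat \<Rightarrow> nat \<Rightarrow> (real \<Rightarrow> (nat \<times> nat) \<Rightarrow> (nat \<times> nat) \<Rightarrow> complex)
     \<Rightarrow> (nat \<Rightarrow> complex) \<Rightarrow> (nat \<Rightarrow> complex) \<Rightarrow> real \<Rightarrow> nat \<Rightarrow> nat \<times> nat list \<Rightarrow> complex" where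
  "Psi D k W psi chi \<theta> n = steps D k (W \<theta>) n (init_state psi chi)"

definition dPsi :: "nat \<Rightarrow> nat \<Rightarrow> (real \<Rightarrow> (nat \<times> nat) \<Rightarrow> (nat \<times> nat) \<Rightarrow> complex)
     \<Rightarrow> (nat \<Rightarrow> complex) \<Rightarrow> (nat \<Rightarrow> complex) \<Rightarrow> real \<Rightarrow> nat \<Rightarrow> nat \<times> nat list \<Rightarrow> complex" where
  "dPsi D k W psi chi \<theta>0 n = (\<lambda>x. vector_derivative (\<lambda>\<theta>. Psi D k W psi chi \<theta> n x) (at \<theta>0))"

definition Mop :: "nat \<Rightarrow> nat \<Rightarrow> (real \<Rightarrow> (nat \<times> nat) \<Rightarrow> (nat \<times> nat) \<Rightarrow> complex)
     \<Rightarrow> (nat \<Rightarrow> complex) \<Rightarrow> (nat \<Rightarrow> complex) \<Rightarrow> real \<Rightarrow> nat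
     \<Rightarrow> nat \<times> nat list \<Rightarrow> nat \<times> nat list \<Rightarrow> complex" where
  "Mop D k W psi chi \<theta>0 n = (\<lambda>x y.
     Psi D k W psi chi \<theta>0 n x * cnj (dPsi D k W psi chi \<theta>0 n y)
     - dPsi D k W psi chi \<theta>0 n x * cnj (Psi D k W psi chi \<theta>0 n y))"

definition evec :: "(nat \<Rightarrow> nat \<Rightarrow> complex) \<Rightarrow> nat list \<Rightarrow> complex" where
  "evec e us = (\<Prod>l<length us. e (Suc l) (us ! l))"

text \<open>Partial matrix element <e^{[1]}..e^{[j-1]}| A |e^{[1]}..e^{[j-1]}> over H_1..H_{j-1},
  giving an operator on H_0 (x) H_j (x) ... (x) H_n (basis index (a, ys), length ys = n-j+1).\<close>
definition partial_elem :: "nat \<Rightarrow> nat \<Rightarrow> (nat \<Rightarrow> nat \<Rightarrow> complex)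
     \<Rightarrow> (nat \<times> nat list \<Rightarrow> nat \<times> nat list \<Rightarrow> complex)
     \<Rightarrow> nat \<times> nat list \<Rightarrow> nat \<times> nat list \<Rightarrow> complex" where
  "partial_elem k m e A = (\<lambda>(a, ys) (b, zs).
     \<Sum>us\<in>cube k m. \<Sum>vs\<in>cube k m. cnj (evec e us) * A (a, us @ ys) (b, vs @ zs) * evec e vs)"

text \<open>Tr_{0, j+1..n} of an operator on H_0 (x) H_j (x) ... (x) H_n; r = n - j traced units.\<close>
definition ptrace_first :: "nat \<Rightarrow> nat \<Rightarrow> nat
     \<Rightarrow> (nat \<times> nat list \<Rightarrow> nat \<times> nat list \<Rightarrow> complex) \<Rightarrow> nat \<Rightarrow> nat \<Rightarrow> complex" where
  "ptrace_first D k r B = (\<lambda>c c'.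
     \<Sum>a<D. \<Sum>ws\<in>cube k r. B (a, c # ws) (a, c' # ws))"

definition Mj :: "nat \<Rightarrow> nat \<Rightarrow> (real \<Rightarrow> (nat \<times> nat) \<Rightarrow> (nat \<times> nat) \<Rightarrow> complex)
     \<Rightarrow> (nat \<Rightarrow> complex) \<Rightarrow> (nat \<Rightarrow> complex) \<Rightarrow> real \<Rightarrow> (nat \<Rightarrow> nat \<Rightarrow> complex)
     \<Rightarrow> nat \<Rightarrow> nat \<Rightarrow> nat \<Rightarrow> nat \<Rightarrow> complex" where
  "Mj D k W psi chi \<theta>0 e n j = ptrace_first D k (n - j)
     (partial_elem k (j - 1) e (Mop D k W psi chi \<theta>0 n))"

end

theory Submission
  imports Defs
begin

text \<open>At \<open>\<theta>0\<close> every \<open>W^(j)\<close> fixes the product vector, so \<open>\<Psi>(n) = \<psi> \<otimes> \<chi>^n\<close> and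
  \<open>M^(n)_j\<close> is built from the constant \<open>\<langle>e[1] \<otimes> \<dots> \<otimes> e[j-1] | \<chi>^(j-1)\<rangle>\<close> and the contraction
  of the derivative \<open>\<Psi>'(n)\<close> against \<open>\<langle>e[1] \<otimes> \<dots> \<otimes> e[j-1]|\<close> on the first units and against
  \<open>\<langle>\<psi> \<otimes> \<chi>^(n-j)|\<close> on \<open>H\<^sub>0\<close> and the last \<open>n - j\<close> units. A unitary fixing \<open>\<psi> \<otimes> \<chi>\<close> also
  satisfies \<open>\<langle>\<psi> \<otimes> \<chi>| W = \<langle>\<psi> \<otimes> \<chi>|\<close>; together with \<open>\<langle>\<psi> \<otimes> \<chi>| W' |\<psi> \<otimes> \<chi>\<rangle> = 0\<close> this shows that
  contracting the last unit of \<open>\<Psi>'(m+1)\<close> against \<open>\<langle>\<psi> \<otimes> \<chi>|\<close> leaves the contraction of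
  \<open>\<Psi>'(m)\<close> against \<open>\<langle>\<psi>|\<close>. Peeling off the units \<open>n, n-1, \<dots>, j+1\<close> in this way removes
  all dependence on \<open>n\<close>.\<close>

lemma finite_pairs [simp]: "finite (pairs D k)"
  by (simp add: pairs_def)

lemma finite_cube [simp]: "finite (cube k m)"
proof -
  have "cube k m = {xs. set xs \<subseteq> {..<k} \<and> length xs = m}"
    by (auto simp: cube_def)
  then show ?thesis
    using finite_lists_length_eq[of "{..<k}" m] by simp
qed

lemma cube_0 [simp]: "cube k 0 = {[]}"
  by (auto simp: cube_def)

lemma sum_cube_Suc: "(\<Sum>ws\<in>cube k (Suc r). g ws) = (\<Sum>ws\<in>cube k r. \<Sum>w<k. g (ws @ [w]))"
proof -
  have cube_Suc: "cube k (Suc r) = (\<lambda>(ws, w). ws @ [w]) ` (cube k r \<times> {..<k})"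
  proof
    show "cube k (Suc r) \<subseteq> (\<lambda>(ws, w). ws @ [w]) ` (cube k r \<times> {..<k})"
    proof
      fix xs assume xs: "xs \<in> cube k (Suc r)"
      then obtain ys y where "xs = ys @ [y]"
        by (cases xs rule: rev_exhaust) (auto simp: cube_def)
      with xs show "xs \<in> (\<lambda>(ws, w). ws @ [w]) ` (cube k r \<times> {..<k})"
        by (auto simp: cube_def image_iff)
    qed
  qed (auto simp: cube_def)
  have "inj_on (\<lambda>(ws, w). ws @ [w]) (cube k r \<times> {..<k})"
    by (auto simp: inj_on_def)
  then show ?thesis
    unfolding cube_Suc by (simp add: sum.reindex sum.cartesian_product case_prod_unfold)
qed

lemma init_state_eq: "init_state psi chi (a, xs) = psi a * prod_list (map chi xs)"
  by (simp add: init_state_def prod.list_conv_set_nth atLeast0LessThan)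

lemma prod_list_map_update:
  fixes f :: "'a \<Rightarrow> 'b::comm_monoid_mult"
  assumes "m < length xs"
  shows "prod_list (map f (xs[m := c])) = f c * prod_list (map f (take m xs @ drop (Suc m) xs))"
  using assms by (simp add: upd_conv_take_nth_drop mult_ac)

lemma steps_init_state:
  assumes fixed: "\<And>a i. a < D \<Longrightarrow> i < k \<Longrightarrow>
        (\<Sum>(b, c)\<in>pairs D k. U (a, i) (b, c) * (psi b * chi c)) = psi a * chi i"
    and "a < D" "set xs \<subseteq> {..<k}" "m \<le> length xs"
  shows "steps D k U m (init_state psi chi) (a, xs) = init_state psi chi (a, xs)"
  using assms(2-)
proof (induction m arbitrary: a xs)
  case 0
  then show ?case by simp
next
  case (Suc m)
  then have m: "m < length xs"
    by simp
  then have xm: "xs ! m < k"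
    using Suc.prems(2) nth_mem by blast
  define R where "R = prod_list (map chi (take m xs @ drop (Suc m) xs))"
  have "steps D k U (Suc m) (init_state psi chi) (a, xs)
      = (\<Sum>(b, c)\<in>pairs D k. U (a, xs ! m) (b, c) * init_state psi chi (b, xs[m := c]))"
  proof (simp add: applyW_def, intro sum.cong refl, clarify)
    fix b c assume "(b, c) \<in> pairs D k"
    then have "b < D" "set (xs[m := c]) \<subseteq> {..<k}"
      using Suc.prems(2) set_update_subset_insert by (fastforce simp: pairs_def)+
    then show "U (a, xs ! m) (b, c) * steps D k U m (init_state psi chi) (b, xs[m := c])
        = U (a, xs ! m) (b, c) * init_state psi chi (b, xs[m := c])"
      using Suc by simp
  qed
  also have "\<dots> = (\<Sum>(b, c)\<in>pairs D k. U (a, xs ! m) (b, c) * (psi b * chi c)) * R"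
    unfolding sum_distrib_right
    by (intro sum.cong refl) (simp add: init_state_eq prod_list_map_update[OF m] R_def case_prod_unfold mult_ac)
  also have "\<dots> = init_state psi chi (a, xs)"
    using fixed[OF Suc.prems(1) xm] prod_list_map_update[OF m, of chi "xs ! m"]
    by (simp add: init_state_eq R_def mult.assoc)
  finally show ?case .
qed

lemma steps_init_state_append:
  "m \<le> length zs \<Longrightarrow> steps D k U m (init_state psi chi) (b, zs @ ys)
     = steps D k U m (init_state psi chi) (b, zs) * prod_list (map chi ys)"
proof (induction m arbitrary: b zs)
  case 0
  then show ?case by (simp add: init_state_eq)
next
  case (Suc m)
  then show ?case
    by (simp add: applyW_def nth_append list_update_append sum_distrib_right case_prod_unfold mult.assoc)
qed

fun dsteps :: "nat \<Rightarrow> nat \<Rightarrow> ((nat \<times> nat) \<Rightarrow> (nat \<times> nat) \<Rightarrow> complex)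
     \<Rightarrow> ((nat \<times> nat) \<Rightarrow> (nat \<times> nat) \<Rightarrow> complex) \<Rightarrow> nat
     \<Rightarrow> (nat \<times> nat list \<Rightarrow> complex) \<Rightarrow> (nat \<times> nat list \<Rightarrow> complex)" where
  "dsteps D k U U' 0 v = (\<lambda>_. 0)"
| "dsteps D k U U' (Suc m) v = (\<lambda>x.
     applyW D k U (Suc m) (dsteps D k U U' m v) x + applyW D k U' (Suc m) (steps D k U m v) x)"

lemma dsteps_init_state_append:
  "m \<le> length zs \<Longrightarrow> dsteps D k U U' m (init_state psi chi) (b, zs @ ys)
     = dsteps D k U U' m (init_state psi chi) (b, zs) * prod_list (map chi ys)"
proof (induction m arbitrary: b zs)
  case 0
  then show ?case by simp
next
  case (Suc m)
  then show ?case
    using steps_init_state_append[of m]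
    by (simp add: applyW_def nth_append list_update_append sum_distrib_right case_prod_unfold
        distrib_right mult.assoc)
qed

lemma has_vector_derivative_steps:
  assumes U': "\<And>p q. p \<in> pairs D k \<Longrightarrow> q \<in> pairs D k \<Longrightarrow>
        ((\<lambda>\<theta>. U \<theta> p q) has_vector_derivative U' p q) (at t)"
    and "a < D" "set xs \<subseteq> {..<k}" "m \<le> length xs"
  shows "((\<lambda>\<theta>. steps D k (U \<theta>) m v (a, xs)) has_vector_derivative dsteps D k (U t) U' m v (a, xs)) (at t)"
  using assms(2-)
proof (induction m arbitrary: a xs)
  case 0
  then show ?case by simp
next
  case (Suc m)
  have "m < length xs"
    using Suc.prems(3) by simp
  then have "xs ! m < k"
    using Suc.prems(2) nth_mem by blast
  have "((\<lambda>\<theta>. \<Sum>p\<in>pairs D k. U \<theta> (a, xs ! m) p * steps D k (U \<theta>) m v (fst p, xs[m := snd p]))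
      has_vector_derivative (\<Sum>p\<in>pairs D k. U t (a, xs ! m) p * dsteps D k (U t) U' m v (fst p, xs[m := snd p])
        + U' (a, xs ! m) p * steps D k (U t) m v (fst p, xs[m := snd p]))) (at t)"
  proof (rule has_vector_derivative_sum)
    fix p assume p: "p \<in> pairs D k"
    have "((\<lambda>\<theta>. U \<theta> (a, xs ! m) p) has_vector_derivative U' (a, xs ! m) p) (at t)"
      using U' p Suc.prems(1) \<open>xs ! m < k\<close> by (simp add: pairs_def)
    moreover have "((\<lambda>\<theta>. steps D k (U \<theta>) m v (fst p, xs[m := snd p]))
        has_vector_derivative dsteps D k (U t) U' m v (fst p, xs[m := snd p])) (at t)"
      using p Suc.prems set_update_subset_insert by (intro Suc.IH) (fastforce simp: pairs_def)+
    ultimately show "((\<lambda>\<theta>. U \<theta> (a, xs ! m) p * steps D k (U \<theta>) m v (fst p, xs[m := snd p]))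
        has_vector_derivative U t (a, xs ! m) p * dsteps D k (U t) U' m v (fst p, xs[m := snd p])
          + U' (a, xs ! m) p * steps D k (U t) m v (fst p, xs[m := snd p])) (at t)"
      by (rule has_vector_derivative_mult)
  qed
  then show ?case
    by (simp add: applyW_def sum.distrib case_prod_unfold)
qed

lemma Psi_eq_product:
  assumes fixed: "\<And>a i. a < D \<Longrightarrow> i < k \<Longrightarrow>
        (\<Sum>(b, c)\<in>pairs D k. W t (a, i) (b, c) * (psi b * chi c)) = psi a * chi i"
    and "a < D" "xs \<in> cube k n"
  shows "Psi D k W psi chi t n (a, xs) = psi a * prod_list (map chi xs)"
  using steps_init_state[OF fixed, of a xs n] assms by (simp add: Psi_def cube_def init_state_eq)

lemma dPsi_eq_dsteps:
  assumes "\<And>p q. p \<in> pairs D k \<Longrightarrow> q \<in> pairs D k \<Longrightarrow> (\<lambda>\<theta>. W \<theta> p q) differentiable (at t)"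
    and "a < D" "xs \<in> cube k n"
  shows "dPsi D k W psi chi t n (a, xs)
    = dsteps D k (W t) (\<lambda>p q. vector_derivative (\<lambda>\<theta>. W \<theta> p q) (at t)) n (init_state psi chi) (a, xs)"
  unfolding dPsi_def Psi_def
  using assms by (intro vector_derivative_at has_vector_derivative_steps)
    (auto simp: cube_def vector_derivative_works[symmetric])

definition tail_overlap :: "nat \<Rightarrow> nat \<Rightarrow> (nat \<Rightarrow> complex) \<Rightarrow> (nat \<Rightarrow> complex) \<Rightarrow> nat
     \<Rightarrow> (nat \<times> nat list \<Rightarrow> complex) \<Rightarrow> nat list \<Rightarrow> complex" where
  "tail_overlap D k psi chi r f zs =
     (\<Sum>a<D. \<Sum>ws\<in>cube k r. cnj (psi a * prod_list (map chi ws)) * f (a, zs @ ws))"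

definition partial_bra :: "nat \<Rightarrow> nat \<Rightarrow> (nat \<Rightarrow> nat \<Rightarrow> complex)
     \<Rightarrow> (nat \<times> nat list \<Rightarrow> complex) \<Rightarrow> nat \<times> nat list \<Rightarrow> complex" where
  "partial_bra k m e f = (\<lambda>(a, ys). \<Sum>us\<in>cube k m. cnj (evec e us) * f (a, us @ ys))"

definition product_overlap :: "nat \<Rightarrow> nat \<Rightarrow> (nat \<Rightarrow> nat \<Rightarrow> complex) \<Rightarrow> (nat \<Rightarrow> complex) \<Rightarrow> complex" where
  "product_overlap k m e chi = (\<Sum>us\<in>cube k m. cnj (evec e us) * prod_list (map chi us))"

lemma partial_elem_commutator:
  "partial_elem k m e (\<lambda>x y. f x * cnj (g y) - g x * cnj (f y)) x y
     = partial_bra k m e f x * cnj (partial_bra k m e g y) - partial_bra k m e g x * cnj (partial_bra k m e f y)"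
  by (cases x; cases y) (simp only: partial_elem_def partial_bra_def case_prod_conv cnj_sum sum_product,
      simp add: sum_subtractf[symmetric] algebra_simps)

lemma tail_overlap_partial_bra:
  "tail_overlap D k psi chi r (partial_bra k m e f) ys
     = (\<Sum>us\<in>cube k m. cnj (evec e us) * tail_overlap D k psi chi r f (us @ ys))"
proof -
  have "tail_overlap D k psi chi r (partial_bra k m e f) ys
      = (\<Sum>a<D. \<Sum>ws\<in>cube k r. \<Sum>us\<in>cube k m.
           cnj (evec e us) * (cnj (psi a * prod_list (map chi ws)) * f (a, us @ ys @ ws)))"
    by (simp add: tail_overlap_def partial_bra_def sum_distrib_left mult_ac)
  also have "\<dots> = (\<Sum>us\<in>cube k m. \<Sum>a<D. \<Sum>ws\<in>cube k r.
           cnj (evec e us) * (cnj (psi a * prod_list (map chi ws)) * f (a, us @ ys @ ws)))"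
    by (subst sum.swap) (simp add: sum.swap[of _ "cube k r"])
  finally show ?thesis
    by (simp add: tail_overlap_def sum_distrib_left)
qed

lemma partial_bra_product:
  assumes f: "\<And>a xs. a < D \<Longrightarrow> xs \<in> cube k (m + length ys) \<Longrightarrow> f (a, xs) = psi a * prod_list (map chi xs)"
    and "a < D" "set ys \<subseteq> {..<k}"
  shows "partial_bra k m e f (a, ys) = psi a * product_overlap k m e chi * prod_list (map chi ys)"
  using assms
  by (auto simp: partial_bra_def product_overlap_def cube_def sum_distrib_left sum_distrib_right mult_ac
      intro!: sum.cong)

lemma ptrace_partial_elem_product_commutator:
  assumes f: "\<And>a xs. a < D \<Longrightarrow> xs \<in> cube k (m + Suc r) \<Longrightarrow> f (a, xs) = psi a * prod_list (map chi xs)"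
    and c: "c < k" and c': "c' < k"
  shows "ptrace_first D k r (partial_elem k m e (\<lambda>x y. f x * cnj (g y) - g x * cnj (f y))) c c'
     = product_overlap k m e chi * chi c * cnj (tail_overlap D k psi chi r (partial_bra k m e g) [c'])
       - cnj (product_overlap k m e chi) * cnj (chi c') * tail_overlap D k psi chi r (partial_bra k m e g) [c]"
proof -
  define F where "F = product_overlap k m e chi"
  have bra_f: "partial_bra k m e f (a, d # ws) = psi a * F * chi d * prod_list (map chi ws)"
    if "a < D" "d < k" "ws \<in> cube k r" for a d ws
    unfolding F_def using that by (subst partial_bra_product[where f = f]) (auto simp: f cube_def mult_ac)
  have "ptrace_first D k r (partial_elem k m e (\<lambda>x y. f x * cnj (g y) - g x * cnj (f y))) c c'
      = (\<Sum>a<D. \<Sum>ws\<in>cube k r. psi a * F * chi c * prod_list (map chi ws) * cnj (partial_bra k m e g (a, [c'] @ ws))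
          - partial_bra k m e g (a, [c] @ ws) * cnj (psi a * F * chi c' * prod_list (map chi ws)))"
    unfolding ptrace_first_def partial_elem_commutator using c c' by (intro sum.cong refl) (simp add: bra_f)
  also have "\<dots> = F * chi c * cnj (tail_overlap D k psi chi r (partial_bra k m e g) [c'])
       - cnj F * cnj (chi c') * tail_overlap D k psi chi r (partial_bra k m e g) [c]"
    by (simp add: tail_overlap_def sum_subtractf sum_distrib_left cnj_sum mult_ac)
  finally show ?thesis
    by (simp add: F_def)
qed

lemma tail_overlap_cong:
  assumes "\<And>a ws. a < D \<Longrightarrow> ws \<in> cube k r \<Longrightarrow> f (a, zs @ ws) = g (a, zs @ ws)"
  shows "tail_overlap D k psi chi r f zs = tail_overlap D k psi chi r g zs"
  using assms by (simp add: tail_overlap_def)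

lemma unitary_mat_adjoint_fixed:
  fixes U :: "(nat \<times> nat) \<Rightarrow> (nat \<times> nat) \<Rightarrow> complex" and u :: "nat \<times> nat \<Rightarrow> complex"
  assumes U: "unitary_mat D k U"
    and fixed: "\<And>p. p \<in> pairs D k \<Longrightarrow> (\<Sum>r\<in>pairs D k. U p r * u r) = u p"
    and q: "q \<in> pairs D k"
  shows "(\<Sum>p\<in>pairs D k. cnj (u p) * U p q) = cnj (u q)"
proof -
  have "(\<Sum>p\<in>pairs D k. cnj (u p) * U p q)
      = (\<Sum>p\<in>pairs D k. cnj (\<Sum>r\<in>pairs D k. U p r * u r) * U p q)"
    using fixed by simp
  also have "\<dots> = (\<Sum>p\<in>pairs D k. \<Sum>r\<in>pairs D k. cnj (u r) * (cnj (U p r) * U p q))"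
    by (simp add: sum_distrib_left sum_distrib_right mult_ac)
  also have "\<dots> = (\<Sum>r\<in>pairs D k. cnj (u r) * (\<Sum>p\<in>pairs D k. cnj (U p r) * U p q))"
    by (subst sum.swap) (simp add: sum_distrib_left)
  also have "\<dots> = (\<Sum>r\<in>pairs D k. if r = q then cnj (u r) else 0)"
    using U q unfolding unitary_mat_def by (intro sum.cong refl) simp
  also have "\<dots> = cnj (u q)"
    using q by simp
  finally show ?thesis .
qed

definition contracted_derivative :: "nat \<Rightarrow> nat \<Rightarrow> ((nat \<times> nat) \<Rightarrow> (nat \<times> nat) \<Rightarrow> complex)
     \<Rightarrow> ((nat \<times> nat) \<Rightarrow> (nat \<times> nat) \<Rightarrow> complex) \<Rightarrow> (nat \<Rightarrow> complex) \<Rightarrow> (nat \<Rightarrow> complex)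
     \<Rightarrow> (nat \<Rightarrow> nat \<Rightarrow> complex) \<Rightarrow> nat \<Rightarrow> nat \<Rightarrow> complex" where
  "contracted_derivative D k U U' psi chi e j c = (\<Sum>us\<in>cube k (j - 1). cnj (evec e us)
     * (\<Sum>a<D. cnj (psi a) * dsteps D k U U' j (init_state psi chi) (a, us @ [c])))"

text \<open>\<open>U\<close> and \<open>U'\<close> stand for \<open>W\<close> and \<open>dW/d\<theta>\<close> at \<open>\<theta>0\<close>.\<close>

locale stationary_product_state =
  fixes D k :: nat
    and U U' :: "(nat \<times> nat) \<Rightarrow> (nat \<times> nat) \<Rightarrow> complex"
    and psi chi :: "nat \<Rightarrow> complex"
  assumes unitary: "unitary_mat D k U"
    and fixes_product: "\<And>a i. a < D \<Longrightarrow> i < k \<Longrightarrow>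
        (\<Sum>(b, c)\<in>pairs D k. U (a, i) (b, c) * (psi b * chi c)) = psi a * chi i"
    and derivative_expectation: "(\<Sum>(a, i)\<in>pairs D k. \<Sum>(b, c)\<in>pairs D k.
        cnj (psi a * chi i) * U' (a, i) (b, c) * (psi b * chi c)) = 0"
    and chi_unit: "(\<Sum>i<k. (cmod (chi i))\<^sup>2) = 1"
begin

lemma overlap_last_unit:
  assumes zs: "set zs \<subseteq> {..<k}"
  shows "(\<Sum>a<D. \<Sum>w<k. cnj (psi a * chi w) * dsteps D k U U' (Suc (length zs)) (init_state psi chi) (a, zs @ [w]))
       = (\<Sum>a<D. cnj (psi a) * dsteps D k U U' (length zs) (init_state psi chi) (a, zs))"
proof -
  define N where "N = length zs"
  define u where "u = (\<lambda>p. psi (fst p) * chi (snd p))"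
  define X where "X = (\<lambda>q. dsteps D k U U' N (init_state psi chi) (fst q, zs) * chi (snd q))"
  define P where "P = prod_list (map chi zs)"
  have "(\<Sum>r\<in>pairs D k. U p r * u r) = u p" if "p \<in> pairs D k" for p
    using fixes_product that by (auto simp: u_def pairs_def case_prod_unfold)
  then have adjoint: "(\<Sum>p\<in>pairs D k. cnj (u p) * U p q) = cnj (u q)" if "q \<in> pairs D k" for q
    using unitary_mat_adjoint_fixed[OF unitary _ that] by blast
  have expectation: "(\<Sum>p\<in>pairs D k. \<Sum>q\<in>pairs D k. cnj (u p) * U' p q * u q) = 0"
    using derivative_expectation by (simp add: u_def case_prod_unfold)
  have unit: "(\<Sum>w<k. cnj (chi w) * chi w) = 1"
  proof -
    have "(\<Sum>w<k. cnj (chi w) * chi w) = (\<Sum>w<k. complex_of_real ((cmod (chi w))\<^sup>2))"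
      by (rule sum.cong[OF refl]) (simp only: complex_norm_square mult.commute)
    then show ?thesis
      using chi_unit by (metis of_real_1 of_real_sum)
  qed
  have last_unit: "dsteps D k U U' (Suc N) (init_state psi chi) (a, zs @ [w])
      = (\<Sum>q\<in>pairs D k. U (a, w) q * X q + U' (a, w) q * (u q * P))" for a w
  proof -
    have "steps D k U N (init_state psi chi) (b, zs @ [c]) = u (b, c) * P"
      if "(b, c) \<in> pairs D k" for b c
      using that zs steps_init_state[OF fixes_product, of b "zs @ [c]" N]
      by (simp add: pairs_def init_state_eq u_def P_def N_def mult_ac)
    moreover have "dsteps D k U U' N (init_state psi chi) (b, zs @ [c]) = X (b, c)" for b c
      using dsteps_init_state_append[of N zs] by (simp add: X_def N_def)
    ultimately show ?thesis
      by (auto simp: applyW_def N_def sum.distrib case_prod_unfold intro!: sum.cong)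
  qed
  have "(\<Sum>a<D. \<Sum>w<k. cnj (psi a * chi w) * dsteps D k U U' (Suc N) (init_state psi chi) (a, zs @ [w]))
      = (\<Sum>p\<in>pairs D k. cnj (u p) * dsteps D k U U' (Suc N) (init_state psi chi) (fst p, zs @ [snd p]))"
    by (simp add: pairs_def u_def sum.cartesian_product case_prod_unfold del: dsteps.simps)
  also have "\<dots> = (\<Sum>p\<in>pairs D k. \<Sum>q\<in>pairs D k. cnj (u p) * U p q * X q)
       + P * (\<Sum>p\<in>pairs D k. \<Sum>q\<in>pairs D k. cnj (u p) * U' p q * u q)"
    by (simp add: last_unit sum_distrib_left sum.distrib algebra_simps del: dsteps.simps)
  txt \<open>The \<open>U'\<close> term of the product rule vanishes and \<open>\<langle>u| U = \<langle>u|\<close> removes \<open>U\<close> from the other.\<close>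
  also have "\<dots> = (\<Sum>q\<in>pairs D k. cnj (u q) * X q)"
    by (subst sum.swap) (simp add: expectation adjoint sum_distrib_right[symmetric])
  also have "\<dots> = (\<Sum>a<D. cnj (psi a) * dsteps D k U U' N (init_state psi chi) (a, zs)) * (\<Sum>w<k. cnj (chi w) * chi w)"
    by (simp add: pairs_def u_def X_def sum.cartesian_product case_prod_unfold sum_distrib_left
        sum_distrib_right mult_ac)
  finally show ?thesis
    by (simp add: unit N_def)
qed

lemma tail_overlap_dsteps:
  assumes zs: "set zs \<subseteq> {..<k}"
  shows "tail_overlap D k psi chi r (dsteps D k U U' (length zs + r) (init_state psi chi)) zs
       = (\<Sum>a<D. cnj (psi a) * dsteps D k U U' (length zs) (init_state psi chi) (a, zs))"
proof (induction r)
  case 0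
  then show ?case
    by (simp add: tail_overlap_def)
next
  case (Suc r)
  have "tail_overlap D k psi chi (Suc r) (dsteps D k U U' (length zs + Suc r) (init_state psi chi)) zs
      = (\<Sum>ws\<in>cube k r. cnj (prod_list (map chi ws)) * (\<Sum>a<D. \<Sum>w<k. cnj (psi a * chi w)
          * dsteps D k U U' (Suc (length (zs @ ws))) (init_state psi chi) (a, (zs @ ws) @ [w])))"
    unfolding tail_overlap_def sum_cube_Suc
    by (subst sum.swap) (auto simp: cube_def sum_distrib_left mult_ac simp del: dsteps.simps intro!: sum.cong)
  also have "\<dots> = (\<Sum>ws\<in>cube k r. cnj (prod_list (map chi ws))
      * (\<Sum>a<D. cnj (psi a) * dsteps D k U U' (length (zs @ ws)) (init_state psi chi) (a, zs @ ws)))"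
  proof (rule sum.cong[OF refl])
    fix ws assume "ws \<in> cube k r"
    then have "set (zs @ ws) \<subseteq> {..<k}"
      using zs by (auto simp: cube_def)
    then show "cnj (prod_list (map chi ws)) * (\<Sum>a<D. \<Sum>w<k. cnj (psi a * chi w)
          * dsteps D k U U' (Suc (length (zs @ ws))) (init_state psi chi) (a, (zs @ ws) @ [w]))
        = cnj (prod_list (map chi ws))
          * (\<Sum>a<D. cnj (psi a) * dsteps D k U U' (length (zs @ ws)) (init_state psi chi) (a, zs @ ws))"
      by (simp only: overlap_last_unit)
  qed
  also have "\<dots> = tail_overlap D k psi chi r (dsteps D k U U' (length zs + r) (init_state psi chi)) zs"
    unfolding tail_overlap_def
    by (subst sum.swap) (auto simp: cube_def sum_distrib_left mult_ac simp del: dsteps.simps intro!: sum.cong)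
  finally show ?case
    using Suc.IH by simp
qed

lemma tail_overlap_partial_bra_dsteps:
  assumes g: "\<And>a xs. a < D \<Longrightarrow> xs \<in> cube k (m + Suc r)
        \<Longrightarrow> g (a, xs) = dsteps D k U U' (m + Suc r) (init_state psi chi) (a, xs)"
    and c: "c < k"
  shows "tail_overlap D k psi chi r (partial_bra k m e g) [c]
     = (\<Sum>us\<in>cube k m. cnj (evec e us)
          * (\<Sum>a<D. cnj (psi a) * dsteps D k U U' (Suc m) (init_state psi chi) (a, us @ [c])))"
  unfolding tail_overlap_partial_bra
proof (intro sum.cong refl arg_cong[where f = "(*) _"])
  fix us assume us: "us \<in> cube k m"
  then have zs: "set (us @ [c]) \<subseteq> {..<k}" and len: "length (us @ [c]) = Suc m"
    using c by (auto simp: cube_def)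
  have "tail_overlap D k psi chi r g (us @ [c])
      = tail_overlap D k psi chi r (dsteps D k U U' (length (us @ [c]) + r) (init_state psi chi)) (us @ [c])"
    using us c by (intro tail_overlap_cong) (auto simp: cube_def g simp del: dsteps.simps)
  also have "\<dots> = (\<Sum>a<D. cnj (psi a) * dsteps D k U U' (length (us @ [c])) (init_state psi chi) (a, us @ [c]))"
    using zs by (rule tail_overlap_dsteps)
  finally show "tail_overlap D k psi chi r g (us @ [c])
      = (\<Sum>a<D. cnj (psi a) * dsteps D k U U' (Suc m) (init_state psi chi) (a, us @ [c]))"
    by (simp only: len)
qed

lemma Mj_eq_contracted_derivative:
  assumes U: "U = W t" and U': "U' = (\<lambda>p q. vector_derivative (\<lambda>\<theta>. W \<theta> p q) (at t))"
    and W: "\<And>p q. p \<in> pairs D k \<Longrightarrow> q \<in> pairs D k \<Longrightarrow> (\<lambda>\<theta>. W \<theta> p q) differentiable (at t)"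
    and j: "1 \<le> j" "j \<le> n" and c: "c < k" and c': "c' < k"
  shows "Mj D k W psi chi t e n j c c'
    = product_overlap k (j - 1) e chi * chi c * cnj (contracted_derivative D k U U' psi chi e j c')
      - cnj (product_overlap k (j - 1) e chi) * cnj (chi c') * contracted_derivative D k U U' psi chi e j c"
proof -
  have n: "j - 1 + Suc (n - j) = n" and Suc_j: "Suc (j - 1) = j"
    using j by simp_all
  have Psi: "Psi D k W psi chi t n (a, xs) = psi a * prod_list (map chi xs)"
    if "a < D" "xs \<in> cube k (j - 1 + Suc (n - j))" for a xs
    using that fixes_product unfolding n U by (intro Psi_eq_product)
  have dPsi: "dPsi D k W psi chi t n (a, xs) = dsteps D k U U' (j - 1 + Suc (n - j)) (init_state psi chi) (a, xs)"
    if "a < D" "xs \<in> cube k (j - 1 + Suc (n - j))" for a xs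
    using that unfolding n U U' by (intro dPsi_eq_dsteps W)
  have contracted: "tail_overlap D k psi chi (n - j) (partial_bra k (j - 1) e (dPsi D k W psi chi t n)) [d]
      = contracted_derivative D k U U' psi chi e j d" if "d < k" for d
    using tail_overlap_partial_bra_dsteps[OF dPsi that] unfolding contracted_derivative_def Suc_j .
  have "Mj D k W psi chi t e n j c c' = ptrace_first D k (n - j) (partial_elem k (j - 1) e
      (\<lambda>x y. Psi D k W psi chi t n x * cnj (dPsi D k W psi chi t n y)
        - dPsi D k W psi chi t n x * cnj (Psi D k W psi chi t n y))) c c'"
    unfolding Mj_def Mop_def ..
  also have "\<dots> = product_overlap k (j - 1) e chi * chi c
        * cnj (tail_overlap D k psi chi (n - j) (partial_bra k (j - 1) e (dPsi D k W psi chi t n)) [c'])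
      - cnj (product_overlap k (j - 1) e chi) * cnj (chi c')
        * tail_overlap D k psi chi (n - j) (partial_bra k (j - 1) e (dPsi D k W psi chi t n)) [c]"
    using Psi c c' by (rule ptrace_partial_elem_product_commutator)
  finally show ?thesis
    using c c' by (simp only: contracted)
qed

end

theorem mainTheorem2:
  fixes D k n j :: nat
    and W :: "real \<Rightarrow> (nat \<times> nat) \<Rightarrow> (nat \<times> nat) \<Rightarrow> complex"
    and psi chi :: "nat \<Rightarrow> complex"
    and \<theta>0 :: real
    and e :: "nat \<Rightarrow> nat \<Rightarrow> complex"
  assumes D2: "D \<ge> 2" and k2: "k \<ge> 2"
    and chi_unit: "(\<Sum>i<k. (cmod (chi i))\<^sup>2) = 1"
    and psi_unit: "(\<Sum>a<D. (cmod (psi a))\<^sup>2) = 1"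
    and W_unitary: "\<And>\<theta>. unitary_mat D k (W \<theta>)"
    and W_smooth: "\<And>p q. p \<in> pairs D k \<Longrightarrow> q \<in> pairs D k \<Longrightarrow> smooth_cfun (\<lambda>\<theta>. W \<theta> p q)"
    and fixed: "\<And>a i. a < D \<Longrightarrow> i < k \<Longrightarrow>
        (\<Sum>(b, c)\<in>pairs D k. W \<theta>0 (a, i) (b, c) * (psi b * chi c)) = psi a * chi i"
    and dW_zero: "(\<Sum>(a, i)\<in>pairs D k. \<Sum>(b, c)\<in>pairs D k.
        cnj (psi a * chi i) * vector_derivative (\<lambda>\<theta>. W \<theta> (a, i) (b, c)) (at \<theta>0)
        * (psi b * chi c)) = 0"
    and j1: "1 \<le> j" and jn: "j \<le> n"
    and e_unit: "\<And>l. 1 \<le> l \<Longrightarrow> l < j \<Longrightarrow> (\<Sum>i<k. (cmod (e l i))\<^sup>2) = 1"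
    and e_unbiased: "\<And>l. 1 \<le> l \<Longrightarrow> l < j \<Longrightarrow>
        (cmod (\<Sum>i<k. cnj (e l i) * chi i))\<^sup>2 = 1 / real k"
  shows "\<forall>c<k. \<forall>c'<k. Mj D k W psi chi \<theta>0 e n j c c' = Mj D k W psi chi \<theta>0 e j j c c'"
proof (intro allI impI)
  fix c c' assume c: "c < k" and c': "c' < k"
  define W' where "W' = (\<lambda>p q. vector_derivative (\<lambda>\<theta>. W \<theta> p q) (at \<theta>0))"
  interpret stationary_product_state D k "W \<theta>0" W' psi chi
    using W_unitary fixed dW_zero chi_unit by unfold_locales (simp_all add: W'_def)
  have W_differentiable: "\<And>p q. p \<in> pairs D k \<Longrightarrow> q \<in> pairs D k \<Longrightarrow> (\<lambda>\<theta>. W \<theta> p q) differentiable (at \<theta>0)"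
    using W_smooth unfolding smooth_cfun_def by (metis funpow_0)
  have Mj_eq: "Mj D k W psi chi \<theta>0 e n' j c c'
      = product_overlap k (j - 1) e chi * chi c * cnj (contracted_derivative D k (W \<theta>0) W' psi chi e j c')
        - cnj (product_overlap k (j - 1) e chi) * cnj (chi c') * contracted_derivative D k (W \<theta>0) W' psi chi e j c"
    if "j \<le> n'" for n'
    using W'_def W_differentiable j1 that c c' by (intro Mj_eq_contracted_derivative) auto
  show "Mj D k W psi chi \<theta>0 e n j c c' = Mj D k W psi chi \<theta>0 e j j c c'"
    unfolding Mj_eq[OF jn] Mj_eq[OF order_refl] ..
qed

end
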